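(* Let $f_1,f_2,f_3,f_4$ be Morse functions on $S^{n-1}$, each with exactly $2$ critical points, such that all of their critical points are pairwise distinct. Then for all sufficiently small $\epsilon>0$, the difference of each pair of functions in $\{\epsilon^3f_1,\epsilon^2f_2,\epsilon f_3,f_4\}$ is a Morse function with exactly $2$ critical points.
   Context: $S^{n-1}$ carries the round metric (restriction of the Euclidean metric), $n\ge2$. *)

theory Defs
  imports "HOL-Analysis.Analysis"
begin

fun Ck_on :: "nat \<Rightarrow> 'a::real_normed_vector set \<Rightarrow> ('a \<Rightarrow> real) \<Rightarrow> bool" where
  "Ck_on 0 U f = continuous_on U f"
| "Ck_on (Suc k) U f =
     ((\<forall>x\<in>U. f differentiable (at x)) \<and>
      (\<forall>v. Ck_on k U (\<lambda>x. frechet_derivative f (at x) v)))"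

definition smooth_on :: "'a::real_normed_vector set \<Rightarrow> ('a \<Rightarrow> real) \<Rightarrow> bool" where
  "smooth_on U f \<longleftrightarrow> open U \<and> (\<forall>k. Ck_on k U f)"

text \<open>The unit sphere S^(n-1) in R^n, n = CARD('n), with the round metric.
  A smooth function on the sphere is (the restriction of) a function that is smooth
  on an open neighbourhood of the sphere.\<close>
abbreviation Sph :: "(real^'n) set" where
  "Sph \<equiv> sphere 0 1"

definition smooth_on_sphere :: "(real^'n \<Rightarrow> real) \<Rightarrow> bool" where
  "smooth_on_sphere f \<longleftrightarrow> (\<exists>U. Sph \<subseteq> U \<and> smooth_on U f)"

definition sphere_crit :: "(real^'n \<Rightarrow> real) \<Rightarrow> real^'n \<Rightarrow> bool" where
  "sphere_crit f x \<longleftrightarrow> x \<in> Sph \<and>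
     (\<forall>v. v \<bullet> x = 0 \<longrightarrow> frechet_derivative f (at x) v = 0)"

definition D2 :: "(real^'n \<Rightarrow> real) \<Rightarrow> real^'n \<Rightarrow> real^'n \<Rightarrow> real^'n \<Rightarrow> real" where
  "D2 f x v w = frechet_derivative (\<lambda>y. frechet_derivative f (at y) v) (at x) w"

text \<open>Hessian of f restricted to the round sphere at a critical point x, on T_x S:
  Hess(v,w) = D^2 f(x)(v,w) - (Df(x) x) (v . w)  (second fundamental form correction).\<close>
definition sphere_hessian :: "(real^'n \<Rightarrow> real) \<Rightarrow> real^'n \<Rightarrow> real^'n \<Rightarrow> real^'n \<Rightarrow> real" where
  "sphere_hessian f x v w = D2 f x v w - frechet_derivative f (at x) x * (v \<bullet> w)"

definition sphere_nondegenerate :: "(real^'n \<Rightarrow> real) \<Rightarrow> real^'n \<Rightarrow> bool" where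
  "sphere_nondegenerate f x \<longleftrightarrow>
     (\<forall>v. v \<bullet> x = 0 \<and> (\<forall>w. w \<bullet> x = 0 \<longrightarrow> sphere_hessian f x v w = 0) \<longrightarrow> v = 0)"

definition morse_on_sphere :: "(real^'n \<Rightarrow> real) \<Rightarrow> bool" where
  "morse_on_sphere f \<longleftrightarrow> smooth_on_sphere f \<and>
     (\<forall>x. sphere_crit f x \<longrightarrow> sphere_nondegenerate f x)"

definition crit_set :: "(real^'n \<Rightarrow> real) \<Rightarrow> (real^'n) set" where
  "crit_set f = {x. sphere_crit f x}"

end

theory Submission
  imports Defs
begin

(* Each pairwise difference is, up to a nonzero factor, a small perturbation F - \<epsilon>^m G (m \<ge> 1)
   of one of the given functions F, so it suffices that a Morse function F with exactly two
   critical points keeps this property under small perturbations F + t G.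

   The critical points of F + t G on the sphere are the points where the gradient field
   g t = grad F + t grad G is normal to the sphere. Near a nondegenerate critical point c of g 0, the
   derivative of a suitable local equation for these points stays uniformly close to an invertible
   operator, the bordered Hessian at c; by the mean value theorem the equation is then injective on
   a small ball, so for t near 0 the ball contains at most one critical point of g t, and that one is
   nondegenerate. On the compact complement of these balls the tangential part of g 0 does not
   vanish, and by the tube lemma neither does that of g t for t near 0. Hence F + t G is Morse with
   at most two critical points, and it has at least two: its maximum and its minimum, which differ
   because the sphere is connected and infinite. *)


lemma eq_0_if_norm_le_contraction:
  fixes w :: "'a::real_normed_vector"
  assumes "norm w \<le> K * norm u" "norm u \<le> \<eta> * norm w" "K * \<eta> < 1"
  shows "w = 0"
proof (rule ccontr)
  assume "w \<noteq> 0"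
  then have w: "norm w > 0" by simp
  then have "K > 0"
    using assms(1) norm_ge_zero[of u] by (smt (verit) zero_less_mult_iff)
  then have "K * norm u \<le> K * (\<eta> * norm w)"
    using assms(2) by (intro mult_left_mono) auto
  then have "norm w \<le> (K * \<eta>) * norm w"
    using assms(1) by (simp add: mult.assoc)
  then have "1 \<le> K * \<eta>"
    using mult_le_cancel_right_pos[OF w, of 1 "K * \<eta>"] by simp
  with assms(3) show False by linarith
qed

lemma inj_on_if_derivative_near:
  fixes f :: "'a::euclidean_space \<Rightarrow> 'b::real_normed_vector"
  assumes "convex S"
    and deriv: "\<And>z. z \<in> S \<Longrightarrow> (f has_derivative f' z) (at z within S)"
    and "linear L" and L_below: "\<And>v. norm v \<le> K * norm (L v)"
    and near: "\<And>z w. z \<in> S \<Longrightarrow> norm (f' z w - L w) \<le> \<eta> * norm w"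
    and "K * \<eta> < 1"
  shows "inj_on f S"
proof (rule inj_onI)
  fix x y assume "x \<in> S" "y \<in> S" "f x = f y"
  have "((\<lambda>z. f z - L z) has_derivative (\<lambda>w. f' z w - L w)) (at z within S)" if "z \<in> S" for z
    by (rule has_derivative_diff[OF deriv[OF that]
          has_derivative_at_withinI[OF linear_imp_has_derivative[OF \<open>linear L\<close>]]])
  moreover have "onorm (\<lambda>w. f' z w - L w) \<le> \<eta>" if "z \<in> S" for z
    by (rule onorm_le) (rule near[OF that])
  ultimately have "norm ((f x - L x) - (f y - L y)) \<le> \<eta> * norm (x - y)"
    by (rule differentiable_bound[OF \<open>convex S\<close>]) (use \<open>x \<in> S\<close> \<open>y \<in> S\<close> in auto)
  then have "norm (L (x - y)) \<le> \<eta> * norm (x - y)"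
    using \<open>f x = f y\<close> linear_diff[OF \<open>linear L\<close>]
    by (simp add: norm_minus_commute)
  then have "x - y = 0"
    by (rule eq_0_if_norm_le_contraction[OF L_below _ \<open>K * \<eta> < 1\<close>])
  then show "x = y" by simp
qed

lemma linear_norm_le_sum_Basis:
  fixes f :: "'a::euclidean_space \<Rightarrow> 'b::real_normed_vector"
  assumes "linear f"
  shows "norm (f x) \<le> (\<Sum>b\<in>Basis. norm (f b)) * norm x"
proof -
  have "f x = f (\<Sum>b\<in>Basis. (x \<bullet> b) *\<^sub>R b)"
    by (simp add: euclidean_representation)
  then have "norm (f x) = norm (\<Sum>b\<in>Basis. (x \<bullet> b) *\<^sub>R f b)"
    using assms by (simp add: linear_sum linear_scale)
  also have "\<dots> \<le> (\<Sum>b\<in>Basis. norm (f b) * norm x)"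
  proof (rule sum_norm_le)
    fix b :: 'a assume "b \<in> Basis"
    then show "norm ((x \<bullet> b) *\<^sub>R f b) \<le> norm (f b) * norm x"
      by (metis Basis_le_norm mult.commute mult_left_mono norm_ge_zero norm_scaleR)
  qed
  finally show ?thesis by (simp add: sum_distrib_right)
qed

lemma finite_card_le_if_unique_in_cover:
  assumes "finite C" "\<And>x. x \<in> X \<Longrightarrow> \<exists>c\<in>C. x \<in> B c"
    and "\<And>c x y. c \<in> C \<Longrightarrow> x \<in> X \<Longrightarrow> y \<in> X \<Longrightarrow> x \<in> B c \<Longrightarrow> y \<in> B c \<Longrightarrow> x = y"
  shows "finite X \<and> card X \<le> card C"
proof -
  obtain m where m: "\<And>x. x \<in> X \<Longrightarrow> m x \<in> C \<and> x \<in> B (m x)"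
    using assms(2) by metis
  have inj: "inj_on m X"
  proof (rule inj_onI)
    fix x y assume "x \<in> X" "y \<in> X" "m x = m y"
    then have "m x \<in> C" "x \<in> B (m x)" "y \<in> B (m x)" using m by metis+
    then show "x = y" using assms(3) \<open>x \<in> X\<close> \<open>y \<in> X\<close> by blast
  qed
  have sub: "m ` X \<subseteq> C" using m by auto
  show ?thesis
    using inj_on_finite[OF inj sub assms(1)] card_inj_on_le[OF inj sub assms(1)] by simp
qed

lemma has_derivative_transform_open:
  assumes "open U" "x \<in> U" "\<And>y. y \<in> U \<Longrightarrow> f y = g y" "(f has_derivative f') (at x)"
  shows "(g has_derivative f') (at x)"
  using has_derivative_transform_within_open[OF assms(4,1,2)] assms(3) by blast

lemma bounded_linear_matrix_vector_mult_left:
  "bounded_linear (\<lambda>M::real^'n^'m. M *v b)"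
  unfolding linear_conv_bounded_linear[symmetric]
  by (simp add: linear_iff matrix_vector_mult_add_rdistrib scaleR_matrix_vector_assoc)

lemma scaleR_mat_1_mult: "(a *\<^sub>R mat 1) *v v = a *\<^sub>R (v :: real^'n)"
  by (metis matrix_vector_mul_lid scaleR_matrix_vector_assoc)

lemma inner_transpose_mult:
  fixes S :: "real^'n^'m"
  shows "(transpose S *v u) \<bullet> w = u \<bullet> (S *v w)"
  unfolding transpose_matrix_vector by (rule dot_lmul_matrix)

section \<open>Smooth functions, gradient and Hessian\<close>

lemma Ck_on_subset:
  assumes "Ck_on k U f" "V \<subseteq> U"
  shows "Ck_on k V f"
  using assms(1) by (induction k arbitrary: f) (use assms(2) continuous_on_subset in auto)

lemma Ck_on_cong:
  assumes "open U" "Ck_on k U f" "\<And>y. y \<in> U \<Longrightarrow> f y = g y"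
  shows "Ck_on k U g"
  using assms(2,3)
proof (induction k arbitrary: f g)
  case 0
  then show ?case using continuous_on_cong by (metis Ck_on.simps(1))
next
  case (Suc k)
  have df: "\<forall>x\<in>U. f differentiable (at x)" using Suc.prems(1) by simp
  have "(g has_derivative frechet_derivative f (at x)) (at x)" if "x \<in> U" for x
    using has_derivative_transform_open[OF assms(1) that, of f g] Suc.prems(2) df that
      frechet_derivative_works by blast
  then have diff: "g differentiable (at x)"
    and fd: "frechet_derivative g (at x) = frechet_derivative f (at x)" if "x \<in> U" for x
    using that differentiableI frechet_derivative_at by metis+
  show ?case
  proof (simp, intro conjI allI ballI)
    show "g differentiable (at x)" if "x \<in> U" for x
      using diff that .
    fix v
    have "Ck_on k U (\<lambda>x. frechet_derivative f (at x) v)"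
      using Suc.prems(1) by simp
    then show "Ck_on k U (\<lambda>x. frechet_derivative g (at x) v)"
      by (rule Suc.IH) (simp add: fd)
  qed
qed

lemma Ck_on_lincomb:
  assumes "open U" "Ck_on k U f" "Ck_on k U g"
  shows "Ck_on k U (\<lambda>x. a * f x + b * g x)"
  using assms(2,3)
proof (induction k arbitrary: f g)
  case 0
  then show ?case by (auto intro!: continuous_intros)
next
  case (Suc k)
  have "\<forall>x\<in>U. f differentiable (at x)" "\<forall>x\<in>U. g differentiable (at x)"
    using Suc.prems by auto
  then have deriv: "((\<lambda>x. a * f x + b * g x) has_derivative
       (\<lambda>v. a * frechet_derivative f (at x) v + b * frechet_derivative g (at x) v)) (at x)"
    if "x \<in> U" for x
    using that by (auto intro!: derivative_eq_intros simp: frechet_derivative_works[symmetric])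
  have fd: "frechet_derivative (\<lambda>x. a * f x + b * g x) (at x) =
      (\<lambda>v. a * frechet_derivative f (at x) v + b * frechet_derivative g (at x) v)" if "x \<in> U" for x
    using deriv[OF that] frechet_derivative_at by metis
  show ?case
  proof (simp, intro conjI allI ballI)
    show "(\<lambda>x. a * f x + b * g x) differentiable (at x)" if "x \<in> U" for x
      using deriv[OF that] differentiableI by blast
    fix v
    have "Ck_on k U (\<lambda>x. a * frechet_derivative f (at x) v + b * frechet_derivative g (at x) v)"
      using Suc.prems by (intro Suc.IH) simp_all
    then show "Ck_on k U (\<lambda>x. frechet_derivative (\<lambda>x. a * f x + b * g x) (at x) v)"
      by (rule Ck_on_cong[OF assms(1)]) (simp add: fd)
  qed
qed

lemma smooth_on_sphere_common_nbhd:
  assumes "smooth_on_sphere F" "smooth_on_sphere G"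
  obtains U where "open U" "Sph \<subseteq> U" "\<And>k. Ck_on k U F" "\<And>k. Ck_on k U G"
proof -
  obtain U1 U2 where "Sph \<subseteq> U1" "open U1" "\<And>k. Ck_on k U1 F"
    and "Sph \<subseteq> U2" "open U2" "\<And>k. Ck_on k U2 G"
    using assms unfolding smooth_on_sphere_def smooth_on_def by metis
  moreover have "Ck_on k (U1 \<inter> U2) F" "Ck_on k (U1 \<inter> U2) G" for k
    by (meson Ck_on_subset Int_lower1 Int_lower2 \<open>\<And>k. Ck_on k U1 F\<close> \<open>\<And>k. Ck_on k U2 G\<close>)+
  ultimately show thesis
    by (intro that[of "U1 \<inter> U2"]) auto
qed

lemma smooth_on_sphere_lincomb:
  assumes "smooth_on_sphere F" "smooth_on_sphere G"
  shows "smooth_on_sphere (\<lambda>x. s * (F x + t * G x))"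
proof -
  obtain U where U: "open U" "Sph \<subseteq> U" and "\<And>k. Ck_on k U F" "\<And>k. Ck_on k U G"
    using smooth_on_sphere_common_nbhd[OF assms] by metis
  then have "Ck_on k U (\<lambda>x. s * (F x + t * G x))" for k
    using Ck_on_lincomb[OF U(1), of k F G s "s * t"] by (simp add: distrib_left mult.assoc)
  then show ?thesis
    unfolding smooth_on_sphere_def smooth_on_def using U by blast
qed

lemma smooth_on_sphere_differentiable:
  assumes "smooth_on_sphere f" "x \<in> Sph"
  shows "f differentiable (at x)"
proof -
  obtain U where "Sph \<subseteq> U" "Ck_on (Suc 0) U f"
    using assms(1) unfolding smooth_on_sphere_def smooth_on_def by blast
  then show ?thesis using assms(2) by auto
qed

definition grad :: "(real^'n \<Rightarrow> real) \<Rightarrow> real^'n \<Rightarrow> real^'n" where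
  "grad f z = (\<chi> j. frechet_derivative f (at z) (axis j 1))"

definition hess :: "(real^'n \<Rightarrow> real) \<Rightarrow> real^'n \<Rightarrow> real^'n^'n" where
  "hess f z = (\<chi> j i. D2 f z (axis j 1) (axis i 1))"

lemma linear_eq_inner_vec:
  fixes L :: "real^'n \<Rightarrow> real"
  assumes "linear L"
  shows "L v = (\<chi> j. L (axis j 1)) \<bullet> v"
proof -
  have "L v = L (\<Sum>j\<in>UNIV. v$j *\<^sub>R axis j 1)"
    using basis_expansion[of v] by (simp add: scalar_mult_eq_scaleR)
  also have "\<dots> = (\<Sum>j\<in>UNIV. v$j * L (axis j 1))"
    using assms by (simp add: linear_sum linear_scale)
  finally show ?thesis
    by (simp add: inner_vec_def mult.commute)
qed

lemma vec_lambda_eq_sum_axis: "(\<chi> j. h j) = (\<Sum>j\<in>UNIV. h j *\<^sub>R axis j (1::real))"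
  by (simp add: vec_eq_iff axis_def if_distrib cong: if_cong)

lemma frechet_derivative_eq_inner_grad:
  assumes "f differentiable (at z)"
  shows "frechet_derivative f (at z) v = grad f z \<bullet> v"
  unfolding grad_def
  by (rule linear_eq_inner_vec) (use assms frechet_derivative_works has_derivative_linear in blast)

lemma has_derivative_inner_grad:
  assumes "f differentiable (at z)"
  shows "(f has_derivative (\<lambda>v. grad f z \<bullet> v)) (at z)"
proof -
  have "frechet_derivative f (at z) = (\<lambda>v. grad f z \<bullet> v)"
    using frechet_derivative_eq_inner_grad[OF assms] by (rule ext)
  then show ?thesis using assms frechet_derivative_works by metis
qed

lemma has_derivative_grad:
  assumes "Ck_on 2 U f" "z \<in> U"
  shows "(grad f has_derivative (\<lambda>w. hess f z *v w)) (at z)"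
proof -
  define g where "g j y = frechet_derivative f (at y) (axis j 1)" for j y
  have "(\<lambda>y. frechet_derivative f (at y) v) differentiable (at z)" for v
    using assms by (simp add: numeral_2_eq_2)
  then have deriv_g: "(g j has_derivative (\<lambda>w. D2 f z (axis j 1) w)) (at z)" for j
    unfolding g_def D2_def using frechet_derivative_works by blast
  have "grad f = (\<lambda>y. \<Sum>j\<in>UNIV. g j y *\<^sub>R axis j (1::real))"
    by (rule ext) (simp add: grad_def g_def vec_lambda_eq_sum_axis)
  moreover have "((\<lambda>y. \<Sum>j\<in>UNIV. g j y *\<^sub>R axis j (1::real)) has_derivative
        (\<lambda>w. \<Sum>j\<in>UNIV. D2 f z (axis j 1) w *\<^sub>R axis j (1::real))) (at z)"
    by (intro has_derivative_sum has_derivative_scaleR_left deriv_g)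
  moreover have "(\<Sum>j\<in>UNIV. D2 f z (axis j 1) w *\<^sub>R axis j (1::real)) = hess f z *v w" for w
  proof -
    have "linear (\<lambda>w. D2 f z (axis j 1) w)" for j
      using deriv_g has_derivative_linear by blast
    then show ?thesis
      unfolding hess_def matrix_vector_mult_def vec_lambda_eq_sum_axis[symmetric]
      by (subst linear_eq_inner_vec) (auto simp: inner_vec_def)
  qed
  ultimately show ?thesis by simp
qed

lemma continuous_on_grad:
  assumes "Ck_on 2 U f"
  shows "continuous_on U (grad f)"
proof -
  have "continuous_on U (\<lambda>y. frechet_derivative f (at y) (axis j 1))" for j
    using assms unfolding numeral_2_eq_2
    by (auto intro!: continuous_at_imp_continuous_on differentiable_imp_continuous_within)
  then show ?thesis unfolding grad_def by (intro continuous_on_vec_lambda)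
qed

lemma continuous_on_hess:
  assumes "Ck_on 2 U f"
  shows "continuous_on U (hess f)"
  using assms unfolding hess_def D2_def numeral_2_eq_2 by (auto intro!: continuous_on_vec_lambda)

section \<open>Nondegenerate bilinear forms on the tangent space of the sphere\<close>

definition proj_perp :: "'a::real_inner \<Rightarrow> 'a \<Rightarrow> 'a" where
  "proj_perp c y = y - (c \<bullet> y) *\<^sub>R c"

lemma inner_proj_perp_left: "norm c = 1 \<Longrightarrow> c \<bullet> proj_perp c y = 0"
  by (simp add: proj_perp_def inner_diff_right dot_square_norm)

lemma inner_proj_perp_same:
  assumes "norm c = 1"
  shows "proj_perp c y \<bullet> y = norm (proj_perp c y) ^ 2"
proof -
  have "c \<bullet> c = 1" using assms by (simp add: norm_eq_1)
  then show ?thesis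
    by (simp add: proj_perp_def power2_norm_eq_inner inner_diff_left inner_diff_right
        inner_commute algebra_simps)
qed

lemma parallel_if_orthogonal_to_perp:
  assumes "norm x = 1" "\<And>w. w \<bullet> x = 0 \<Longrightarrow> y \<bullet> w = 0"
  shows "y = (y \<bullet> x) *\<^sub>R x"
proof -
  have "proj_perp x y \<bullet> x = 0"
    using inner_proj_perp_left[OF assms(1)] by (simp add: inner_commute)
  then have "y \<bullet> proj_perp x y = 0" by (rule assms(2))
  then have "proj_perp x y = 0"
    using inner_proj_perp_same[OF assms(1), of y] by (simp add: inner_commute)
  then show ?thesis by (simp add: proj_perp_def inner_commute)
qed

lemma proj_perp_diff_scaleR_self:
  "norm c = 1 \<Longrightarrow> proj_perp c (y - a *\<^sub>R c) = proj_perp c y"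
  by (simp add: proj_perp_def inner_diff_right dot_square_norm algebra_simps)

lemma has_derivative_proj_perp:
  "(f has_derivative f') F \<Longrightarrow> ((\<lambda>x. proj_perp c (f x)) has_derivative (\<lambda>x. proj_perp c (f' x))) F"
  unfolding proj_perp_def by (intro derivative_intros)

definition nondeg_on_perp :: "real^'n \<Rightarrow> real^'n^'n \<Rightarrow> bool" where
  "nondeg_on_perp x S \<longleftrightarrow> (\<forall>v. v \<bullet> x = 0 \<and> (\<forall>w. w \<bullet> x = 0 \<longrightarrow> (S *v w) \<bullet> v = 0) \<longrightarrow> v = 0)"

(* For a unit vector x this operator is invertible iff the bilinear form (S w) \<bullet> v is
   nondegenerate on the tangent space x\<^sup>\<bottom>. *)
definition bordered :: "real^'n \<Rightarrow> real^'n^'n \<Rightarrow> real^'n \<Rightarrow> real^'n" where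
  "bordered x S w = proj_perp x (S *v w) + (x \<bullet> w) *\<^sub>R x"

lemma linear_bordered: "linear (bordered x S)"
  unfolding bordered_def
  by (simp add: linear_iff proj_perp_def matrix_vector_right_distrib
      matrix_vector_mult_scaleR inner_add_right algebra_simps)

lemma inner_bordered_left: "norm x = 1 \<Longrightarrow> x \<bullet> bordered x S w = x \<bullet> w"
  by (simp add: bordered_def inner_add_right inner_proj_perp_left dot_square_norm)

lemma bordered_eq_0_imp_eq_0:
  assumes x: "norm x = 1" and nd: "nondeg_on_perp x (transpose S)" and eq: "bordered x S w = 0"
  shows "w = 0"
proof -
  have xw: "x \<bullet> w = 0"
    using inner_bordered_left[OF x, of S w] eq by simp
  then have "proj_perp x (S *v w) = 0"
    using eq by (simp add: bordered_def)
  then obtain a where Sw: "S *v w = a *\<^sub>R x"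
    unfolding proj_perp_def by (metis eq_iff_diff_eq_0)
  have "(transpose S *v u) \<bullet> w = 0" if "u \<bullet> x = 0" for u
    using that by (simp only: inner_transpose_mult Sw) simp
  moreover have "w \<bullet> x = 0" using xw by (simp only: inner_commute)
  ultimately show "w = 0"
    using nd[unfolded nondeg_on_perp_def, THEN spec[of _ w]] by blast
qed

(* The bordered operator is injective, hence surjective, and surjectivity kills the left kernel. *)
lemma nondeg_on_perp_if_transpose:
  assumes x: "norm x = 1" and nd: "nondeg_on_perp x (transpose S)"
  shows "nondeg_on_perp x S"
  unfolding nondeg_on_perp_def
proof (intro allI impI, elim conjE)
  fix v assume vx: "v \<bullet> x = 0" and ker: "\<forall>w. w \<bullet> x = 0 \<longrightarrow> (S *v w) \<bullet> v = 0"
  have "inj (bordered x S)"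
    unfolding linear_injective_0[OF linear_bordered]
    using bordered_eq_0_imp_eq_0[OF x nd] by blast
  then have "surj (bordered x S)"
    by (simp add: linear_bordered linear_injective_imp_surjective)
  then obtain w where w: "bordered x S w = v"
    using surjD[of "bordered x S" v] by auto
  then have "w \<bullet> x = 0"
    using inner_bordered_left[OF x, of S w] vx by (simp add: inner_commute)
  then have "0 = (S *v w) \<bullet> v" using ker by simp
  also have "\<dots> = bordered x S w \<bullet> v"
    using vx by (simp add: bordered_def proj_perp_def inner_add_left inner_diff_left inner_commute[of x v])
  also have "\<dots> = v \<bullet> v" using w by simp
  finally show "v = 0" by (metis inner_eq_zero_iff)
qed

lemma nondeg_on_perp_transpose_iff:
  assumes "norm x = 1"
  shows "nondeg_on_perp x (transpose S) \<longleftrightarrow> nondeg_on_perp x S"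
proof
  show "nondeg_on_perp x S" if "nondeg_on_perp x (transpose S)"
    using that by (rule nondeg_on_perp_if_transpose[OF assms])
  show "nondeg_on_perp x (transpose S)" if "nondeg_on_perp x S"
    using nondeg_on_perp_if_transpose[OF assms, of "transpose S"] that by simp
qed

section \<open>Stability of the critical points of a vector field on the sphere\<close>

(* x is a critical point of the restriction to the sphere of any function with gradient field h. *)
definition field_crit :: "(real^'n \<Rightarrow> real^'n) \<Rightarrow> real^'n \<Rightarrow> bool" where
  "field_crit h x \<longleftrightarrow> norm x = 1 \<and> (\<forall>v. v \<bullet> x = 0 \<longrightarrow> h x \<bullet> v = 0)"

definition tangential :: "(real^'n \<Rightarrow> real^'n) \<Rightarrow> real^'n \<Rightarrow> real^'n" where
  "tangential h z = h z - (h z \<bullet> z) *\<^sub>R z"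

lemma field_crit_imp_parallel: "field_crit h x \<Longrightarrow> h x = (h x \<bullet> x) *\<^sub>R x"
  unfolding field_crit_def by (intro parallel_if_orthogonal_to_perp) auto

lemma field_crit_iff_tangential:
  assumes "norm x = 1"
  shows "field_crit h x \<longleftrightarrow> tangential h x = 0"
proof
  assume "field_crit h x"
  then show "tangential h x = 0"
    using field_crit_imp_parallel by (simp add: tangential_def)
next
  assume "tangential h x = 0"
  then obtain a where "h x = a *\<^sub>R x"
    unfolding tangential_def by (metis eq_iff_diff_eq_0)
  then show "field_crit h x"
    using assms by (simp add: field_crit_def inner_commute)
qed

locale field_family =
  fixes U :: "(real^'n) set"
    and g :: "'p::t2_space \<Rightarrow> real^'n \<Rightarrow> real^'n"
    and A :: "'p \<Rightarrow> real^'n \<Rightarrow> real^'n^'n"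
  assumes open_U: "open U"
    and sphere_subset: "Sph \<subseteq> U"
    and has_derivative_g: "\<And>t z. z \<in> U \<Longrightarrow> (g t has_derivative (\<lambda>w. A t z *v w)) (at z)"
    and continuous_g: "continuous_on (UNIV \<times> U) (\<lambda>p. g (fst p) (snd p))"
    and continuous_A: "continuous_on (UNIV \<times> U) (\<lambda>p. A (fst p) (snd p))"
begin

(* Matrix of the Hessian of the restricted function at a critical point, with the Lagrange
   multiplier g t x \<bullet> x as in sphere_hessian. *)
definition shifted_hess :: "'p \<Rightarrow> real^'n \<Rightarrow> real^'n^'n" where
  "shifted_hess t x = A t x - (g t x \<bullet> x) *\<^sub>R mat 1"

(* A local equation for the critical points of g t near c. The normal term ((z \<bullet> z - 1) / 2) c
   makes its derivative at a critical point c the (invertible) bordered Hessian. *)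
definition crit_map :: "real^'n \<Rightarrow> 'p \<Rightarrow> real^'n \<Rightarrow> real^'n" where
  "crit_map c t z = proj_perp c (tangential (g t) z) + ((z \<bullet> z - 1) / 2) *\<^sub>R c"

definition crit_map_deriv :: "real^'n \<Rightarrow> 'p \<Rightarrow> real^'n \<Rightarrow> real^'n \<Rightarrow> real^'n" where
  "crit_map_deriv c t z w =
     proj_perp c (A t z *v w - ((A t z *v w) \<bullet> z + g t z \<bullet> w) *\<^sub>R z - (g t z \<bullet> z) *\<^sub>R w)
     + (z \<bullet> w) *\<^sub>R c"

lemma has_derivative_crit_map:
  assumes "z \<in> U"
  shows "(crit_map c t has_derivative crit_map_deriv c t z) (at z)"
proof -
  have "(tangential (g t) has_derivative
      (\<lambda>w. A t z *v w - ((A t z *v w) \<bullet> z + g t z \<bullet> w) *\<^sub>R z - (g t z \<bullet> z) *\<^sub>R w)) (at z)"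
    unfolding tangential_def using has_derivative_g[OF assms]
    by (auto intro!: derivative_eq_intros simp: algebra_simps inner_commute)
  then show ?thesis
    unfolding crit_map_def crit_map_deriv_def
    by (auto intro!: derivative_eq_intros has_derivative_proj_perp simp: inner_commute algebra_simps)
qed

lemma crit_map_eq_0: "field_crit (g t) z \<Longrightarrow> crit_map c t z = 0"
  using field_crit_iff_tangential[of z "g t"]
  by (simp add: crit_map_def field_crit_def proj_perp_def dot_square_norm)

lemma crit_map_deriv_at_crit:
  assumes "field_crit (g t) c"
  shows "crit_map_deriv c t c w = bordered c (shifted_hess t c) w"
proof -
  have c: "norm c = 1" using assms by (simp add: field_crit_def)
  define \<mu> where "\<mu> = g t c \<bullet> c"
  have gc: "g t c = \<mu> *\<^sub>R c" using field_crit_imp_parallel[OF assms] by (simp add: \<mu>_def)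
  have "shifted_hess t c *v w = A t c *v w - \<mu> *\<^sub>R w"
    by (simp add: shifted_hess_def \<mu>_def matrix_vector_mult_diff_rdistrib scaleR_mat_1_mult)
  then have "A t c *v w - ((A t c *v w) \<bullet> c + g t c \<bullet> w) *\<^sub>R c - (g t c \<bullet> c) *\<^sub>R w
      = (shifted_hess t c *v w) - ((A t c *v w) \<bullet> c + \<mu> * (c \<bullet> w)) *\<^sub>R c"
    using c by (simp add: gc dot_square_norm algebra_simps)
  then show ?thesis
    by (simp add: crit_map_deriv_def bordered_def proj_perp_diff_scaleR_self[OF c])
qed

lemma crit_map_deriv_eq_0_if_kernel:
  assumes crit: "field_crit (g t) x" and vx: "v \<bullet> x = 0"
    and ker: "\<And>w. w \<bullet> x = 0 \<Longrightarrow> (shifted_hess t x *v v) \<bullet> w = 0"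
  shows "crit_map_deriv c t x v = 0"
proof -
  have x: "norm x = 1" using crit by (simp add: field_crit_def)
  define \<mu> where "\<mu> = g t x \<bullet> x"
  have gx: "g t x = \<mu> *\<^sub>R x" using field_crit_imp_parallel[OF crit] by (simp add: \<mu>_def)
  have Sv: "shifted_hess t x *v v = ((shifted_hess t x *v v) \<bullet> x) *\<^sub>R x"
    using parallel_if_orthogonal_to_perp[OF x ker] .
  have "shifted_hess t x *v v = A t x *v v - \<mu> *\<^sub>R v"
    by (simp add: shifted_hess_def \<mu>_def matrix_vector_mult_diff_rdistrib scaleR_mat_1_mult)
  moreover have "(shifted_hess t x *v v) \<bullet> x = (A t x *v v) \<bullet> x"
    using vx by (simp add: shifted_hess_def \<mu>_def matrix_vector_mult_diff_rdistrib
        scaleR_mat_1_mult inner_diff_left)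
  ultimately have "A t x *v v - ((A t x *v v) \<bullet> x + g t x \<bullet> v) *\<^sub>R x - (g t x \<bullet> x) *\<^sub>R v = 0"
    using Sv vx x by (simp add: gx \<mu>_def[symmetric] inner_commute dot_square_norm algebra_simps)
  then show ?thesis
    using vx by (simp add: crit_map_deriv_def proj_perp_def inner_commute)
qed

lemma nondeg_if_crit_map_deriv_injective:
  assumes crit: "field_crit (g t) x" and inj: "\<And>v. crit_map_deriv c t x v = 0 \<Longrightarrow> v = 0"
  shows "nondeg_on_perp x (shifted_hess t x)"
proof -
  have x: "norm x = 1" using crit by (simp add: field_crit_def)
  have "nondeg_on_perp x (transpose (shifted_hess t x))"
    unfolding nondeg_on_perp_def
  proof (intro allI impI, elim conjE)
    fix v assume vx: "v \<bullet> x = 0"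
      and ker: "\<forall>w. w \<bullet> x = 0 \<longrightarrow> (transpose (shifted_hess t x) *v w) \<bullet> v = 0"
    have "(shifted_hess t x *v v) \<bullet> w = 0" if "w \<bullet> x = 0" for w
      using ker that inner_transpose_mult[of "shifted_hess t x" w v] by (simp add: inner_commute)
    then have "crit_map_deriv c t x v = 0"
      by (rule crit_map_deriv_eq_0_if_kernel[OF crit vx])
    then show "v = 0" by (rule inj)
  qed
  then show ?thesis using nondeg_on_perp_transpose_iff[OF x] by simp
qed

lemma eventually_crit_map_deriv_near:
  assumes "c \<in> U" "\<eta> > 0"
  shows "\<forall>\<^sub>F p in nhds (t0, c). snd p \<in> U \<and>
    (\<forall>w. norm (crit_map_deriv c (fst p) (snd p) w - crit_map_deriv c t0 c w) \<le> \<eta> * norm w)"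
proof -
  have "(t0, c) \<in> UNIV \<times> U" using assms(1) by simp
  then have cg: "continuous (at (t0, c)) (\<lambda>p. g (fst p) (snd p))"
    and cA: "continuous (at (t0, c)) (\<lambda>p. A (fst p) (snd p))"
    using continuous_g continuous_A open_U
    by (simp_all add: continuous_on_eq_continuous_at open_Times)
  have cAb: "continuous (at (t0, c)) (\<lambda>p. A (fst p) (snd p) *v b)" for b
    using bounded_linear.continuous[OF bounded_linear_matrix_vector_mult_left cA] .
  define D where "D p = (\<Sum>b\<in>Basis. norm (crit_map_deriv c (fst p) (snd p) b - crit_map_deriv c t0 c b))"
    for p
  have "continuous (at (t0, c)) D"
    unfolding D_def crit_map_deriv_def proj_perp_def
    by (intro continuous_intros cg cAb)
  then have "(D \<longlongrightarrow> D (t0, c)) (nhds (t0, c))"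
    by (simp only: isCont_def tendsto_at_iff_tendsto_nhds)
  moreover have "D (t0, c) < \<eta>"
    using assms(2) by (simp add: D_def)
  ultimately have "\<forall>\<^sub>F p in nhds (t0, c). D p < \<eta>"
    by (rule order_tendstoD(2))
  moreover have "\<forall>\<^sub>F p in nhds (t0, c). p \<in> UNIV \<times> U"
    using assms(1) open_U by (intro eventually_nhds_in_open) (auto intro: open_Times)
  ultimately show ?thesis
  proof eventually_elim
    case (elim p)
    then have "snd p \<in> U" by auto
    have "linear (crit_map_deriv c (fst p) (snd p))" "linear (crit_map_deriv c t0 c)"
      using has_derivative_crit_map \<open>snd p \<in> U\<close> assms(1) has_derivative_linear by blast+
    then have "linear (\<lambda>w. crit_map_deriv c (fst p) (snd p) w - crit_map_deriv c t0 c w)"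
      by (rule linear_compose_sub)
    then have "norm (crit_map_deriv c (fst p) (snd p) w - crit_map_deriv c t0 c w) \<le> D p * norm w" for w
      unfolding D_def by (rule linear_norm_le_sum_Basis)
    also have "D p * norm w \<le> \<eta> * norm w" for w
      using elim by (intro mult_right_mono) auto
    finally show ?case using \<open>snd p \<in> U\<close> by blast
  qed
qed

definition unique_nondeg_crit_in :: "real^'n \<Rightarrow> real \<Rightarrow> 'p \<Rightarrow> bool" where
  "unique_nondeg_crit_in c r t \<longleftrightarrow> (\<forall>x\<in>ball c r. field_crit (g t) x \<longrightarrow>
     nondeg_on_perp x (shifted_hess t x) \<and> (\<forall>y\<in>ball c r. field_crit (g t) y \<longrightarrow> y = x))"

lemma unique_nondeg_crit_in_if_deriv_near:
  assumes "linear L" and L_below: "\<And>v. norm v \<le> K * norm (L v)" and "K * \<eta> < 1"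
    and near: "\<And>z w. z \<in> ball c r \<Longrightarrow> z \<in> U \<and> norm (crit_map_deriv c t z w - L w) \<le> \<eta> * norm w"
  shows "unique_nondeg_crit_in c r t"
  unfolding unique_nondeg_crit_in_def
proof (intro ballI impI)
  fix x assume "x \<in> ball c r" "field_crit (g t) x"
  have "nondeg_on_perp x (shifted_hess t x)"
  proof (rule nondeg_if_crit_map_deriv_injective[OF \<open>field_crit (g t) x\<close>])
    fix v assume "crit_map_deriv c t x v = 0"
    then have "norm (L v) \<le> \<eta> * norm v"
      using near[OF \<open>x \<in> ball c r\<close>, of v] by simp
    then show "v = 0"
      by (rule eq_0_if_norm_le_contraction[OF L_below _ \<open>K * \<eta> < 1\<close>])
  qed
  have "inj_on (crit_map c t) (ball c r)"
  proof (rule inj_on_if_derivative_near[OF convex_ball _ \<open>linear L\<close> L_below _ \<open>K * \<eta> < 1\<close>])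
    show "(crit_map c t has_derivative crit_map_deriv c t z) (at z within ball c r)"
      if "z \<in> ball c r" for z
      using has_derivative_crit_map near[OF that] has_derivative_at_withinI by blast
  qed (use near in blast)
  then have "\<forall>y\<in>ball c r. field_crit (g t) y \<longrightarrow> y = x"
    using \<open>x \<in> ball c r\<close> \<open>field_crit (g t) x\<close> crit_map_eq_0 inj_onD by metis
  with \<open>nondeg_on_perp x (shifted_hess t x)\<close>
  show "nondeg_on_perp x (shifted_hess t x) \<and> (\<forall>y\<in>ball c r. field_crit (g t) y \<longrightarrow> y = x)" ..
qed

lemma eventually_unique_nondeg_crit_near:
  assumes cU: "c \<in> U" and crit: "field_crit (g t0) c"
    and nd: "nondeg_on_perp c (shifted_hess t0 c)"
  obtains r where "r > 0" "\<forall>\<^sub>F t in nhds t0. unique_nondeg_crit_in c r t"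
proof -
  have c: "norm c = 1" using crit by (simp add: field_crit_def)
  define L where "L = bordered c (shifted_hess t0 c)"
  have L_eq: "crit_map_deriv c t0 c = L"
    using crit_map_deriv_at_crit[OF crit] by (auto simp: L_def)
  have "nondeg_on_perp c (transpose (shifted_hess t0 c))"
    using nd nondeg_on_perp_transpose_iff[OF c] by simp
  then have "\<forall>v\<in>UNIV. L v = 0 \<longrightarrow> v = 0"
    using bordered_eq_0_imp_eq_0[OF c] by (simp add: L_def)
  then obtain e where "e > 0" and e: "\<And>v. e * norm v \<le> norm (L v)"
    using injective_imp_isometric[of UNIV L] linear_bordered
    by (auto simp: L_def linear_conv_bounded_linear)
  then have L_below: "norm v \<le> (1 / e) * norm (L v)" for v
    by (simp add: field_simps)
  obtain P Q where P: "\<forall>\<^sub>F t in nhds t0. P t" and Q: "\<forall>\<^sub>F z in nhds c. Q z"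
    and PQ: "\<And>t z. P t \<Longrightarrow> Q z \<Longrightarrow>
      z \<in> U \<and> (\<forall>w. norm (crit_map_deriv c t z w - L w) \<le> e / 2 * norm w)"
    using eventually_crit_map_deriv_near[OF cU, of "e / 2" t0] \<open>e > 0\<close>
    unfolding nhds_prod eventually_prod_filter L_eq by auto
  obtain r where "r > 0" and r: "\<And>z. z \<in> ball c r \<Longrightarrow> Q z"
    using Q unfolding eventually_nhds_metric by (auto simp: dist_commute)
  have "unique_nondeg_crit_in c r t" if "P t" for t
  proof (rule unique_nondeg_crit_in_if_deriv_near[OF _ L_below])
    show "linear L" by (simp add: L_def linear_bordered)
    show "1 / e * (e / 2) < 1" using \<open>e > 0\<close> by simp
  qed (use PQ[OF that r] in blast)
  with \<open>r > 0\<close> P show thesis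
    by (metis that eventually_mono)
qed

lemma eventually_crit_subset_open:
  assumes "open V" and crit_V: "\<And>x. field_crit (g t0) x \<Longrightarrow> x \<in> V"
  shows "\<forall>\<^sub>F t in nhds t0. \<forall>x. field_crit (g t) x \<longrightarrow> x \<in> V"
proof -
  define K where "K = Sph - V"
  define W where "W = (\<lambda>p. tangential (g (fst p)) (snd p)) -` (- {0}) \<inter> (UNIV \<times> U)"
  have "compact K"
    unfolding K_def using \<open>open V\<close> by (intro compact_diff compact_sphere)
  moreover have "continuous_on (UNIV \<times> U) (\<lambda>p. tangential (g (fst p)) (snd p))"
    unfolding tangential_def
    by (intro continuous_intros continuous_g continuous_on_snd)
  then have "open W"
    unfolding W_def using open_U by (auto simp: continuous_on_open_vimage open_Times)
  moreover have "{t0} \<times> K \<subseteq> W"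
  proof clarify
    fix x assume "x \<in> K"
    then have "norm x = 1" "x \<in> U" "x \<notin> V"
      using sphere_subset by (auto simp: K_def)
    then show "(t0, x) \<in> W"
      using crit_V field_crit_iff_tangential[of x "g t0"] by (auto simp: W_def)
  qed
  ultimately obtain X0 where "t0 \<in> X0" "open X0" "X0 \<times> K \<subseteq> W"
    using Elementary_Topology.tube_lemma by metis
  then have "\<forall>\<^sub>F t in nhds t0. t \<in> X0"
    by (intro eventually_nhds_in_open)
  then show ?thesis
  proof eventually_elim
    case (elim t)
    show ?case
    proof (intro allI impI)
      fix x assume crit: "field_crit (g t) x"
      then have "norm x = 1" by (simp add: field_crit_def)
      then have "tangential (g t) x = 0"
        using crit field_crit_iff_tangential by blast
      then have "(t, x) \<notin> X0 \<times> K"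
        using \<open>X0 \<times> K \<subseteq> W\<close> by (auto simp: W_def)
      then show "x \<in> V"
        using elim \<open>norm x = 1\<close> by (auto simp: K_def)
    qed
  qed
qed

lemma eventually_crit_finite_nondeg:
  assumes fin: "finite {x. field_crit (g t0) x}"
    and nd: "\<And>x. field_crit (g t0) x \<Longrightarrow> nondeg_on_perp x (shifted_hess t0 x)"
  shows "\<forall>\<^sub>F t in nhds t0. finite {x. field_crit (g t) x} \<and>
    card {x. field_crit (g t) x} \<le> card {x. field_crit (g t0) x} \<and>
    (\<forall>x. field_crit (g t) x \<longrightarrow> nondeg_on_perp x (shifted_hess t x))"
proof -
  define C where "C = {x. field_crit (g t0) x}"
  have "\<exists>r. r > 0 \<and> (\<forall>\<^sub>F t in nhds t0. unique_nondeg_crit_in c r t)" if "c \<in> C" for c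
  proof -
    have crit: "field_crit (g t0) c" using that by (simp add: C_def)
    then have "c \<in> U" using sphere_subset by (auto simp: field_crit_def)
    then obtain r where "r > 0" "\<forall>\<^sub>F t in nhds t0. unique_nondeg_crit_in c r t"
      using eventually_unique_nondeg_crit_near[OF _ crit nd[OF crit]] by blast
    then show ?thesis by blast
  qed
  then obtain r where r_pos: "\<And>c. c \<in> C \<Longrightarrow> r c > 0"
    and r: "\<forall>c\<in>C. \<forall>\<^sub>F t in nhds t0. unique_nondeg_crit_in c (r c) t"
    using bchoice[of C "\<lambda>c r. r > 0 \<and> (\<forall>\<^sub>F t in nhds t0. unique_nondeg_crit_in c r t)"] by blast
  have "finite C" using fin by (simp add: C_def)
  then have "\<forall>\<^sub>F t in nhds t0. \<forall>c\<in>C. unique_nondeg_crit_in c (r c) t"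
    using r by (rule eventually_ball_finite)
  moreover have "\<forall>\<^sub>F t in nhds t0. \<forall>x. field_crit (g t) x \<longrightarrow> x \<in> (\<Union>c\<in>C. ball c (r c))"
    using r_pos by (intro eventually_crit_subset_open) (auto simp: C_def)
  ultimately show ?thesis
  proof eventually_elim
    case (elim t)
    then have cover: "\<exists>c\<in>C. x \<in> ball c (r c)" if "field_crit (g t) x" for x
      using that by blast
    have "finite {x. field_crit (g t) x} \<and> card {x. field_crit (g t) x} \<le> card C"
    proof (rule finite_card_le_if_unique_in_cover[where B = "\<lambda>c. ball c (r c)"])
      show "finite C" by fact
      show "\<exists>c\<in>C. x \<in> ball c (r c)" if "x \<in> {x. field_crit (g t) x}" for x
        using cover that by simp
      show "x = y" if "c \<in> C" "x \<in> {x. field_crit (g t) x}" "y \<in> {x. field_crit (g t) x}"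
        "x \<in> ball c (r c)" "y \<in> ball c (r c)" for c x y
        using elim that unfolding unique_nondeg_crit_in_def by auto
    qed
    moreover have "nondeg_on_perp x (shifted_hess t x)" if "field_crit (g t) x" for x
      using cover[OF that] elim that unfolding unique_nondeg_crit_in_def by blast
    ultimately show ?case by (simp add: C_def)
  qed
qed

end

section \<open>Perturbations of Morse functions on the sphere\<close>

lemma lincomb_derivatives:
  assumes U: "open U" and F: "Ck_on 2 U F" and G: "Ck_on 2 U G" and z: "z \<in> U"
  shows "frechet_derivative (\<lambda>x. s * (F x + t * G x)) (at z) v =
      s * ((grad F z + t *\<^sub>R grad G z) \<bullet> v)"
    and "D2 (\<lambda>x. s * (F x + t * G x)) z v w =
      s * (((hess F z + t *\<^sub>R hess G z) *v w) \<bullet> v)"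
proof -
  have deriv: "((\<lambda>x. s * (F x + t * G x)) has_derivative
      (\<lambda>v. s * ((grad F y + t *\<^sub>R grad G y) \<bullet> v))) (at y)" if "y \<in> U" for y
  proof -
    have "(F has_derivative (\<lambda>v. grad F y \<bullet> v)) (at y)" "(G has_derivative (\<lambda>v. grad G y \<bullet> v)) (at y)"
      using F G that by (simp_all add: numeral_2_eq_2 has_derivative_inner_grad)
    then have "((\<lambda>x. s * (F x + t * G x)) has_derivative
        (\<lambda>v. s * (grad F y \<bullet> v + t * (grad G y \<bullet> v)))) (at y)"
      by (intro has_derivative_mult_right has_derivative_add)
    then show ?thesis by (simp add: inner_add_left)
  qed
  have fd: "frechet_derivative (\<lambda>x. s * (F x + t * G x)) (at y) =
      (\<lambda>v. s * ((grad F y + t *\<^sub>R grad G y) \<bullet> v))" if "y \<in> U" for y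
    using frechet_derivative_at[OF deriv[OF that]] by (rule sym)
  then show "frechet_derivative (\<lambda>x. s * (F x + t * G x)) (at z) v =
      s * ((grad F z + t *\<^sub>R grad G z) \<bullet> v)"
    using z by simp
  have "((\<lambda>y. s * ((grad F y + t *\<^sub>R grad G y) \<bullet> v)) has_derivative
      (\<lambda>w. s * ((hess F z *v w + t *\<^sub>R (hess G z *v w)) \<bullet> v))) (at z)"
    using has_derivative_grad[OF F z] has_derivative_grad[OF G z]
    by (intro has_derivative_mult_right has_derivative_inner_left has_derivative_add
        has_derivative_scaleR_right)
  moreover have "(\<lambda>w. s * ((hess F z *v w + t *\<^sub>R (hess G z *v w)) \<bullet> v)) =
      (\<lambda>w. s * (((hess F z + t *\<^sub>R hess G z) *v w) \<bullet> v))"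
    by (simp add: matrix_vector_mult_add_rdistrib scaleR_matrix_vector_assoc)
  ultimately have "((\<lambda>y. s * ((grad F y + t *\<^sub>R grad G y) \<bullet> v)) has_derivative
      (\<lambda>w. s * (((hess F z + t *\<^sub>R hess G z) *v w) \<bullet> v))) (at z)"
    by simp
  then have "((\<lambda>y. frechet_derivative (\<lambda>x. s * (F x + t * G x)) (at y) v) has_derivative
      (\<lambda>w. s * (((hess F z + t *\<^sub>R hess G z) *v w) \<bullet> v))) (at z)"
    by (rule has_derivative_transform_open[OF U z, rotated]) (simp add: fd)
  then show "D2 (\<lambda>x. s * (F x + t * G x)) z v w = s * (((hess F z + t *\<^sub>R hess G z) *v w) \<bullet> v)"
    unfolding D2_def by (simp add: frechet_derivative_at[symmetric])
qed

context
  fixes U :: "(real^'n) set" and F G :: "real^'n \<Rightarrow> real"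
  assumes U: "open U" "Sph \<subseteq> U" and F: "Ck_on 2 U F" and G: "Ck_on 2 U G"
begin

lemma field_family_lincomb:
  "field_family U (\<lambda>t z. grad F z + t *\<^sub>R grad G z) (\<lambda>t z. hess F z + t *\<^sub>R hess G z)"
proof
  show "((\<lambda>z. grad F z + t *\<^sub>R grad G z) has_derivative
      (\<lambda>w. (hess F z + t *\<^sub>R hess G z) *v w)) (at z)" if "z \<in> U" for t z
    using has_derivative_grad[OF F that] has_derivative_grad[OF G that]
    by (auto intro!: derivative_eq_intros simp: matrix_vector_mult_add_rdistrib
        scaleR_matrix_vector_assoc)
  have snd_U: "snd ` (UNIV \<times> U) \<subseteq> U" by auto
  have "continuous_on (UNIV \<times> U) (\<lambda>p. grad F (snd p))" "continuous_on (UNIV \<times> U) (\<lambda>p. grad G (snd p))"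
    "continuous_on (UNIV \<times> U) (\<lambda>p. hess F (snd p))" "continuous_on (UNIV \<times> U) (\<lambda>p. hess G (snd p))"
    using continuous_on_grad[OF F] continuous_on_grad[OF G] continuous_on_hess[OF F] continuous_on_hess[OF G]
    by (auto intro: continuous_on_compose2[OF _ continuous_on_snd snd_U])
  then show "continuous_on (UNIV \<times> U) (\<lambda>p. grad F (snd p) + fst p *\<^sub>R grad G (snd p))"
    "continuous_on (UNIV \<times> U) (\<lambda>p. hess F (snd p) + fst p *\<^sub>R hess G (snd p))"
    by (auto intro!: continuous_intros)
qed (use U in auto)

lemma sphere_crit_lincomb_iff:
  assumes "s \<noteq> 0"
  shows "sphere_crit (\<lambda>x. s * (F x + t * G x)) x \<longleftrightarrow> field_crit (\<lambda>z. grad F z + t *\<^sub>R grad G z) x"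
proof (cases "x \<in> Sph")
  case True
  then have "x \<in> U" using U by auto
  then show ?thesis
    using assms lincomb_derivatives(1)[OF U(1) F G] True
    by (simp add: sphere_crit_def field_crit_def)
next
  case False
  then show ?thesis by (simp add: sphere_crit_def field_crit_def)
qed

lemma sphere_nondegenerate_lincomb_iff:
  assumes "s \<noteq> 0" "x \<in> Sph"
  shows "sphere_nondegenerate (\<lambda>x. s * (F x + t * G x)) x \<longleftrightarrow>
    nondeg_on_perp x (hess F x + t *\<^sub>R hess G x - ((grad F x + t *\<^sub>R grad G x) \<bullet> x) *\<^sub>R mat 1)"
proof -
  define h where "h = (\<lambda>x. s * (F x + t * G x))"
  have "x \<in> U" using U assms(2) by auto
  note derivs = lincomb_derivatives[OF U(1) F G this, of s t, folded h_def]
  have "sphere_hessian h x v w = s *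
      (((hess F x + t *\<^sub>R hess G x - ((grad F x + t *\<^sub>R grad G x) \<bullet> x) *\<^sub>R mat 1) *v w) \<bullet> v)"
    for v w
    unfolding sphere_hessian_def derivs
    by (simp add: matrix_vector_mult_diff_rdistrib scaleR_mat_1_mult inner_diff_left
        inner_commute[of w v] algebra_simps)
  then show ?thesis
    using assms(1) by (simp add: sphere_nondegenerate_def nondeg_on_perp_def h_def[symmetric])
qed

end

lemma sphere_crit_if_extremum:
  fixes h :: "real^'n \<Rightarrow> real"
  assumes x: "x \<in> Sph" and dh: "h differentiable (at x)"
    and ext: "(\<forall>y\<in>Sph. h y \<le> h x) \<or> (\<forall>y\<in>Sph. h x \<le> h y)"
  shows "sphere_crit h x"
  unfolding sphere_crit_def
proof (intro conjI allI impI x)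
  fix v :: "real^'n" assume vx: "v \<bullet> x = 0"
  define L where "L = frechet_derivative h (at x)"
  have hL: "(h has_derivative L) (at x)" unfolding L_def using dh frechet_derivative_works by blast
  have lin: "linear L" using hL has_derivative_linear by blast
  show "frechet_derivative h (at x) v = 0"
  proof (cases "v = 0")
    case True
    then show ?thesis using lin linear_0 unfolding L_def by blast
  next
    case False
    define w where "w = (1 / norm v) *\<^sub>R v"
    have ww: "w \<bullet> w = 1" unfolding w_def using False by (simp add: dot_square_norm power2_eq_square)
    have xx: "x \<bullet> x = 1" using x norm_eq_1 by auto
    have wx: "w \<bullet> x = 0" unfolding w_def using vx by simp
    define \<gamma> where "\<gamma> s = cos s *\<^sub>R x + sin s *\<^sub>R w" for s
    have \<gamma>_sphere: "\<gamma> s \<in> Sph" for s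
    proof -
      have "\<gamma> s \<bullet> \<gamma> s = (cos s)\<^sup>2 * (x \<bullet> x) + 2 * (cos s * sin s) * (w \<bullet> x) + (sin s)\<^sup>2 * (w \<bullet> w)"
        unfolding \<gamma>_def by (simp add: inner_add_left inner_add_right inner_commute power2_eq_square algebra_simps)
      also have "\<dots> = 1" using xx ww wx by simp
      finally show ?thesis by (simp add: norm_eq_1)
    qed
    have "\<gamma> 0 = x" unfolding \<gamma>_def by simp
    have "(\<gamma> has_derivative (\<lambda>s. s *\<^sub>R w)) (at 0)"
      unfolding \<gamma>_def by (auto intro!: derivative_eq_intros)
    then have "((h \<circ> \<gamma>) has_derivative (L \<circ> (\<lambda>s. s *\<^sub>R w))) (at 0)"
      by (rule diff_chain_at) (simp add: \<open>\<gamma> 0 = x\<close> hL)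
    then have deriv: "((h \<circ> \<gamma>) has_real_derivative L w) (at 0)"
      by (rule has_derivative_imp_has_field_derivative) (simp add: linear_scale[OF lin])
    have "L w = 0"
      using ext
    proof
      assume "\<forall>y\<in>Sph. h y \<le> h x"
      then show "L w = 0" using \<gamma>_sphere \<open>\<gamma> 0 = x\<close>
        by (intro DERIV_local_max[OF deriv zero_less_one]) simp
    next
      assume "\<forall>y\<in>Sph. h x \<le> h y"
      then show "L w = 0" using \<gamma>_sphere \<open>\<gamma> 0 = x\<close>
        by (intro DERIV_local_min[OF deriv zero_less_one]) simp
    qed
    have "L v = L (norm v *\<^sub>R w)" unfolding w_def using False by simp
    also have "\<dots> = norm v * L w" by (simp add: linear_scale[OF lin])
    finally show ?thesis using \<open>L w = 0\<close> by (simp add: L_def)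
  qed
qed

lemma infinite_sphere:
  assumes "CARD('n) \<ge> 2"
  shows "infinite (Sph :: (real^'n) set)"
proof
  assume "finite (Sph :: (real^'n) set)"
  moreover have "connected (Sph :: (real^'n) set)"
    by (rule connected_sphere) (use assms in simp)
  ultimately obtain a where "(Sph :: (real^'n) set) \<subseteq> {a}"
    using connected_finite_iff_sing by (metis subset_refl empty_subsetI)
  moreover obtain k :: 'n where True by blast
  have "axis k (1::real) \<in> Sph" "- axis k (1::real) \<in> Sph" by simp_all
  ultimately have "axis k (1::real) = - axis k 1" by blast
  then show False by (metis axis_nth neg_equal_zero one_neq_zero vector_uminus_component)
qed

lemma two_le_card_crit_set:
  fixes h :: "real^'n \<Rightarrow> real"
  assumes n: "CARD('n) \<ge> 2" and h: "smooth_on_sphere h" and fin: "finite (crit_set h)"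
  shows "2 \<le> card (crit_set h)"
proof -
  have dh: "h differentiable (at x)" if "x \<in> Sph" for x
    using smooth_on_sphere_differentiable[OF h that] .
  have "continuous_on Sph h"
    using dh by (meson continuous_at_imp_continuous_on differentiable_imp_continuous_within)
  moreover have "(Sph :: (real^'n) set) \<noteq> {}" using infinite_sphere[OF n] by auto
  ultimately obtain a b where a: "a \<in> Sph" "\<forall>y\<in>Sph. h y \<le> h a"
    and b: "b \<in> Sph" "\<forall>y\<in>Sph. h b \<le> h y"
    using continuous_attains_sup[OF compact_sphere] continuous_attains_inf[OF compact_sphere] by metis
  have crit_ext: "y \<in> crit_set h" if "y \<in> Sph" "(\<forall>z\<in>Sph. h z \<le> h y) \<or> (\<forall>z\<in>Sph. h y \<le> h z)" for y
    using sphere_crit_if_extremum[OF that(1) dh[OF that(1)] that(2)] by (simp add: crit_set_def)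
  have "a \<noteq> b"
  proof
    assume "a = b"
    then have "Sph \<subseteq> crit_set h"
      using a b crit_ext by (metis order_antisym subsetI)
    then show False using fin infinite_sphere[OF n] finite_subset by blast
  qed
  then have "card {a, b} = 2" by simp
  moreover have "{a, b} \<subseteq> crit_set h" using crit_ext a b by blast
  ultimately show ?thesis using fin card_mono by metis
qed

lemma eventually_morse_perturbation:
  assumes F: "morse_on_sphere F" and fin: "finite (crit_set F)" and G: "smooth_on_sphere G"
  shows "\<forall>\<^sub>F t in nhds 0. \<forall>s. s \<noteq> 0 \<longrightarrow>
    morse_on_sphere (\<lambda>x. s * (F x + t * G x)) \<and>
    finite (crit_set (\<lambda>x. s * (F x + t * G x))) \<and>
    card (crit_set (\<lambda>x. s * (F x + t * G x))) \<le> card (crit_set F)"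
proof -
  obtain U where U: "open U" "Sph \<subseteq> U" and CF: "\<And>k. Ck_on k U F" and CG: "\<And>k. Ck_on k U G"
    using smooth_on_sphere_common_nbhd F G unfolding morse_on_sphere_def by metis
  define g where "g = (\<lambda>(t::real) z. grad F z + t *\<^sub>R grad G z)"
  define A where "A = (\<lambda>(t::real) z. hess F z + t *\<^sub>R hess G z)"
  interpret field_family U g A
    unfolding g_def A_def using field_family_lincomb[OF U CF CG] .
  have crit_eq: "crit_set (\<lambda>x. s * (F x + t * G x)) = {x. field_crit (g t) x}" if "s \<noteq> 0" for s t
    using sphere_crit_lincomb_iff[OF U CF CG that] by (simp add: crit_set_def g_def)
  have nondeg_iff: "sphere_nondegenerate (\<lambda>x. s * (F x + t * G x)) x \<longleftrightarrow>
      nondeg_on_perp x (shifted_hess t x)" if "s \<noteq> 0" "x \<in> Sph" for s t x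
    using sphere_nondegenerate_lincomb_iff[OF U CF CG that]
    unfolding shifted_hess_def unfolding g_def A_def by simp
  have F_eq: "(\<lambda>x. 1 * (F x + 0 * G x)) = F" by simp
  have "\<forall>\<^sub>F t in nhds 0. finite {x. field_crit (g t) x} \<and>
      card {x. field_crit (g t) x} \<le> card {x. field_crit (g 0) x} \<and>
      (\<forall>x. field_crit (g t) x \<longrightarrow> nondeg_on_perp x (shifted_hess t x))"
  proof (rule eventually_crit_finite_nondeg)
    show "finite {x. field_crit (g 0) x}"
      using fin crit_eq[of 1 0] by (simp add: F_eq)
    show "nondeg_on_perp x (shifted_hess 0 x)" if "field_crit (g 0) x" for x
    proof -
      have "sphere_crit F x" "x \<in> Sph"
        using that crit_eq[of 1 0] by (auto simp: F_eq crit_set_def field_crit_def)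
      then show ?thesis
        using F nondeg_iff[of 1 x 0] by (simp add: F_eq morse_on_sphere_def)
    qed
  qed
  then show ?thesis
  proof eventually_elim
    case (elim t)
    show ?case
    proof (intro allI impI conjI)
      fix s :: real assume "s \<noteq> 0"
      have "smooth_on_sphere (\<lambda>x. s * (F x + t * G x))"
        using F G by (simp add: morse_on_sphere_def smooth_on_sphere_lincomb)
      moreover have "sphere_nondegenerate (\<lambda>x. s * (F x + t * G x)) x"
        if "sphere_crit (\<lambda>x. s * (F x + t * G x)) x" for x
        using that elim crit_eq[OF \<open>s \<noteq> 0\<close>, of t] nondeg_iff[OF \<open>s \<noteq> 0\<close>]
        by (auto simp: crit_set_def sphere_crit_def)
      ultimately show "morse_on_sphere (\<lambda>x. s * (F x + t * G x))"
        by (simp add: morse_on_sphere_def)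
      show "finite (crit_set (\<lambda>x. s * (F x + t * G x)))"
        "card (crit_set (\<lambda>x. s * (F x + t * G x))) \<le> card (crit_set F)"
        using elim crit_eq[OF \<open>s \<noteq> 0\<close>] crit_eq[of 1 0] by (simp_all add: F_eq)
    qed
  qed
qed

definition morse_two_crit :: "(real^'n \<Rightarrow> real) \<Rightarrow> bool" where
  "morse_two_crit f \<longleftrightarrow> morse_on_sphere f \<and> card (crit_set f) = 2"

lemma eventually_morse_two_crit_perturbation:
  assumes n: "CARD('n) \<ge> 2" and F: "morse_two_crit F" and G: "smooth_on_sphere G"
  shows "\<forall>\<^sub>F t in nhds 0. \<forall>s. s \<noteq> 0 \<longrightarrow> morse_two_crit (\<lambda>x::real^'n. s * (F x + t * G x))"
proof -
  have "morse_on_sphere F" "finite (crit_set F)" and card_F: "card (crit_set F) = 2"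
    using F by (simp_all add: morse_two_crit_def card_ge_0_finite)
  have "\<forall>\<^sub>F t in nhds 0. \<forall>s. s \<noteq> 0 \<longrightarrow>
      morse_on_sphere (\<lambda>x. s * (F x + t * G x)) \<and>
      finite (crit_set (\<lambda>x. s * (F x + t * G x))) \<and>
      card (crit_set (\<lambda>x. s * (F x + t * G x))) \<le> 2"
    using eventually_morse_perturbation[OF \<open>morse_on_sphere F\<close> \<open>finite (crit_set F)\<close> G]
    unfolding card_F .
  then show ?thesis
  proof eventually_elim
    case (elim t)
    show ?case
    proof (intro allI impI)
      fix s :: real assume "s \<noteq> 0"
      then have "morse_on_sphere (\<lambda>x. s * (F x + t * G x))"
        and "finite (crit_set (\<lambda>x. s * (F x + t * G x)))"
        and "card (crit_set (\<lambda>x. s * (F x + t * G x))) \<le> 2"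
        using elim by blast+
      moreover have "2 \<le> card (crit_set (\<lambda>x. s * (F x + t * G x)))"
        by (rule two_le_card_crit_set[OF n]) (use calculation in \<open>simp_all add: morse_on_sphere_def\<close>)
      ultimately show "morse_two_crit (\<lambda>x. s * (F x + t * G x))"
        by (simp add: morse_two_crit_def)
    qed
  qed
qed

lemma eventually_weighted_difference_morse_two_crit:
  assumes n: "CARD('n) \<ge> 2" and F: "morse_two_crit F" and G: "smooth_on_sphere G"
    and "p < q"
  shows "\<forall>\<^sub>F \<epsilon> in at_right 0. morse_two_crit (\<lambda>x::real^'n. \<epsilon> ^ p * F x - \<epsilon> ^ q * G x) \<and>
    morse_two_crit (\<lambda>x. \<epsilon> ^ q * G x - \<epsilon> ^ p * F x)"
proof -
  have "filterlim (\<lambda>\<epsilon>::real. - (\<epsilon> ^ (q - p))) (nhds 0) (at_right 0)"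
    using \<open>p < q\<close> by (auto intro!: tendsto_eq_intros)
  then have "\<forall>\<^sub>F \<epsilon> in at_right 0. \<forall>s. s \<noteq> 0 \<longrightarrow>
      morse_two_crit (\<lambda>x. s * (F x + - (\<epsilon> ^ (q - p)) * G x))"
    using eventually_morse_two_crit_perturbation[OF n F G] unfolding filterlim_iff by blast
  moreover have "\<forall>\<^sub>F \<epsilon> in at_right 0. (0::real) < \<epsilon>"
    by (rule eventually_at_right_less)
  ultimately show ?thesis
  proof eventually_elim
    case (elim \<epsilon>)
    have "(\<lambda>x. \<epsilon> ^ p * (F x + - (\<epsilon> ^ (q - p)) * G x)) = (\<lambda>x. \<epsilon> ^ p * F x - \<epsilon> ^ q * G x)"
      "(\<lambda>x. - (\<epsilon> ^ p) * (F x + - (\<epsilon> ^ (q - p)) * G x)) = (\<lambda>x. \<epsilon> ^ q * G x - \<epsilon> ^ p * F x)"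
      using \<open>p < q\<close> by (auto simp: algebra_simps power_add[symmetric])
    moreover have "morse_two_crit (\<lambda>x. \<epsilon> ^ p * (F x + - (\<epsilon> ^ (q - p)) * G x))"
      "morse_two_crit (\<lambda>x. - (\<epsilon> ^ p) * (F x + - (\<epsilon> ^ (q - p)) * G x))"
      using elim(1)[rule_format, of "\<epsilon> ^ p"] elim(1)[rule_format, of "- (\<epsilon> ^ p)"] elim(2)
      by simp_all
    ultimately show ?case by (simp only:)
  qed
qed

lemma eventually_weighted_differences_morse_two_crit:
  fixes fs :: "(real^'n \<Rightarrow> real) list" and p :: "nat \<Rightarrow> nat"
  assumes n: "CARD('n) \<ge> 2" and fs: "\<forall>f\<in>set fs. morse_two_crit f"
    and p: "inj_on p {..<length fs}"
  shows "\<forall>\<^sub>F \<epsilon> in at_right 0. \<forall>i<length fs. \<forall>j<length fs. i \<noteq> j \<longrightarrow>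
    morse_two_crit (\<lambda>x. \<epsilon> ^ p i * (fs ! i) x - \<epsilon> ^ p j * (fs ! j) x)"
proof -
  have "\<forall>\<^sub>F \<epsilon> in at_right 0. morse_two_crit (\<lambda>x. \<epsilon> ^ p i * (fs ! i) x - \<epsilon> ^ p j * (fs ! j) x)"
    if "i < length fs" "j < length fs" "i \<noteq> j" for i j
  proof -
    have morse: "morse_two_crit (fs ! k)" "smooth_on_sphere (fs ! k)" if "k < length fs" for k
      using fs that by (auto simp: morse_two_crit_def morse_on_sphere_def)
    have "p i \<noteq> p j" using p that by (auto simp: inj_on_def)
    then consider "p i < p j" | "p j < p i" by linarith
    then show ?thesis
    proof cases
      case 1
      then show ?thesis
        using eventually_weighted_difference_morse_two_crit[OF n morse(1)[OF \<open>i < length fs\<close>]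
            morse(2)[OF \<open>j < length fs\<close>] 1] by (auto elim: eventually_mono)
    next
      case 2
      then show ?thesis
        using eventually_weighted_difference_morse_two_crit[OF n morse(1)[OF \<open>j < length fs\<close>]
            morse(2)[OF \<open>i < length fs\<close>] 2] by (auto elim: eventually_mono)
    qed
  qed
  then have "\<forall>\<^sub>F \<epsilon> in at_right 0. i \<noteq> j \<longrightarrow>
      morse_two_crit (\<lambda>x. \<epsilon> ^ p i * (fs ! i) x - \<epsilon> ^ p j * (fs ! j) x)"
    if "i < length fs" "j < length fs" for i j
    using that by (cases "i = j") (auto elim: eventually_mono)
  then have "\<forall>\<^sub>F \<epsilon> in at_right 0. \<forall>i\<in>{..<length fs}. \<forall>j\<in>{..<length fs}. i \<noteq> j \<longrightarrow>
      morse_two_crit (\<lambda>x. \<epsilon> ^ p i * (fs ! i) x - \<epsilon> ^ p j * (fs ! j) x)"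
    by (intro eventually_ball_finite ballI) auto
  then show ?thesis
    by (simp add: Ball_def)
qed

theorem lemma4p1:
  fixes f1 f2 f3 f4 :: "real^'n \<Rightarrow> real"
  assumes "CARD('n) \<ge> 2"
    and "\<forall>f\<in>{f1, f2, f3, f4}. morse_on_sphere f \<and> card (crit_set f) = 2"
    and "\<forall>i<4. \<forall>j<4. i \<noteq> j \<longrightarrow> crit_set ([f1, f2, f3, f4] ! i) \<inter> crit_set ([f1, f2, f3, f4] ! j) = {}"
  shows "\<exists>\<epsilon>0>0. \<forall>\<epsilon>. 0 < \<epsilon> \<and> \<epsilon> < \<epsilon>0 \<longrightarrow>
           (let g = [(\<lambda>x. \<epsilon>^3 * f1 x), (\<lambda>x. \<epsilon>^2 * f2 x), (\<lambda>x. \<epsilon> * f3 x), f4]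
            in \<forall>i<4. \<forall>j<4. i \<noteq> j \<longrightarrow>
                 morse_on_sphere (\<lambda>x. (g ! i) x - (g ! j) x) \<and>
                 card (crit_set (\<lambda>x. (g ! i) x - (g ! j) x)) = 2)"
proof -
  define fs where "fs = [f1, f2, f3, f4]"
  have "\<forall>\<^sub>F \<epsilon> in at_right 0. \<forall>i<4. \<forall>j<4. i \<noteq> j \<longrightarrow>
      morse_two_crit (\<lambda>x. \<epsilon> ^ (3 - i) * (fs ! i) x - \<epsilon> ^ (3 - j) * (fs ! j) x)"
  proof -
    have "\<forall>f\<in>set fs. morse_two_crit f"
      using assms(2) by (simp add: fs_def morse_two_crit_def)
    moreover have "inj_on (\<lambda>i. 3 - i) {..<length fs}"
      by (auto simp: fs_def inj_on_def)
    moreover have "length fs = 4" by (simp add: fs_def)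
    ultimately show ?thesis
      using eventually_weighted_differences_morse_two_crit[OF assms(1), of fs "\<lambda>i. 3 - i"] by simp
  qed
  then obtain \<epsilon>0 where "\<epsilon>0 > 0" and \<epsilon>0: "\<And>\<epsilon>. 0 < \<epsilon> \<Longrightarrow> \<epsilon> < \<epsilon>0 \<Longrightarrow> \<forall>i<4. \<forall>j<4. i \<noteq> j \<longrightarrow>
      morse_two_crit (\<lambda>x. \<epsilon> ^ (3 - i) * (fs ! i) x - \<epsilon> ^ (3 - j) * (fs ! j) x)"
    unfolding eventually_at_right_field by auto
  show ?thesis
  proof (intro exI[of _ \<epsilon>0] conjI allI impI \<open>\<epsilon>0 > 0\<close>, elim conjE)
    fix \<epsilon> :: real assume "0 < \<epsilon>" "\<epsilon> < \<epsilon>0"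
    have "[(\<lambda>x. \<epsilon>^3 * f1 x), (\<lambda>x. \<epsilon>^2 * f2 x), (\<lambda>x. \<epsilon> * f3 x), f4] ! i = (\<lambda>x. \<epsilon> ^ (3 - i) * (fs ! i) x)"
      if "i < 4" for i
    proof -
      have "i = 0 \<or> i = 1 \<or> i = 2 \<or> i = 3" using that by arith
      then show ?thesis by (auto simp: fs_def)
    qed
    then show "let g = [(\<lambda>x. \<epsilon>^3 * f1 x), (\<lambda>x. \<epsilon>^2 * f2 x), (\<lambda>x. \<epsilon> * f3 x), f4]
        in \<forall>i<4. \<forall>j<4. i \<noteq> j \<longrightarrow>
          morse_on_sphere (\<lambda>x. (g ! i) x - (g ! j) x) \<and> card (crit_set (\<lambda>x. (g ! i) x - (g ! j) x)) = 2"
      using \<epsilon>0[OF \<open>0 < \<epsilon>\<close> \<open>\<epsilon> < \<epsilon>0\<close>] by (simp add: Let_def morse_two_crit_def)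
  qed
qed

end
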